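(* Over a $4$-letter alphabet there is no complete bifurcate tree; more precisely, there is no complete bifurcate tree over a $4$-letter alphabet containing words of length more than $6$ (and since every complete bifurcate tree contains arbitrarily long words, none exists at all).
   Context: A square is a nonempty word of the form $XX$; a word is square-free if it has no (contiguous) factor that is a square. For a word $W$ of length $n$ and $0\le i\le n$, let $P_i(W)$, $S_i(W)$ be the prefix and suffix of $W$ of length $i$; an extension of $W$ at position $i$ over alphabet $\mathcal{A}$ is a word $P_i(W)\mathtt{x}S_{n-i}(W)$ with $\mathtt{x}\in\mathcal{A}$. A square-free word of length $n$ is bifurcate over $\mathcal{A}$ if for each position $i\in\{0,\dots,n\}$ it has a square-free extension at position $i$. A bifurcate tree over $\mathcal{A}$ is a family of bifurcate words over $\mathcal{A}$ arranged as a rooted tree in which the children of a word $W$ are single-letter extensions of $W$ at pairwise different positions. It is complete if every word of length $n$ in it has exactly $n+1$ children (one extension at each position $0,\dots,n$). *)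

theory Defs
  imports Main
begin

definition square :: "'a list \<Rightarrow> bool" where
  "square w \<longleftrightarrow> (\<exists>x. x \<noteq> [] \<and> w = x @ x)"

definition is_factor :: "'a list \<Rightarrow> 'a list \<Rightarrow> bool" where
  "is_factor u w \<longleftrightarrow> (\<exists>p s. w = p @ u @ s)"

definition square_free :: "'a list \<Rightarrow> bool" where
  "square_free w \<longleftrightarrow> \<not> (\<exists>u. is_factor u w \<and> square u)"

definition extension :: "'a list \<Rightarrow> nat \<Rightarrow> 'a \<Rightarrow> 'a list" where
  "extension W i x = take i W @ [x] @ drop i W"

definition bifurcate :: "'a set \<Rightarrow> 'a list \<Rightarrow> bool" where
  "bifurcate A W \<longleftrightarrow> set W \<subseteq> A \<and> square_free W \<and>
     (\<forall>i \<le> length W. \<exists>x\<in>A. square_free (extension W i x))"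

definition children :: "'n set \<Rightarrow> 'n \<Rightarrow> ('n \<Rightarrow> 'n) \<Rightarrow> 'n \<Rightarrow> 'n set" where
  "children V r par v = {u \<in> V. u \<noteq> r \<and> par u = v}"

definition rooted_tree :: "'n set \<Rightarrow> 'n \<Rightarrow> ('n \<Rightarrow> 'n) \<Rightarrow> bool" where
  "rooted_tree V r par \<longleftrightarrow> r \<in> V \<and> (\<forall>v \<in> V - {r}. par v \<in> V) \<and>
     (\<forall>v \<in> V. \<exists>k. (par ^^ k) v = r)"

definition bifurcate_tree ::
  "'a set \<Rightarrow> 'n set \<Rightarrow> 'n \<Rightarrow> ('n \<Rightarrow> 'n) \<Rightarrow> ('n \<Rightarrow> 'a list) \<Rightarrow> ('n \<Rightarrow> nat) \<Rightarrow> bool" where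
  "bifurcate_tree A V r par lab pos \<longleftrightarrow>
     rooted_tree V r par \<and>
     (\<forall>v \<in> V. bifurcate A (lab v)) \<and>
     (\<forall>u \<in> V - {r}. pos u \<le> length (lab (par u)) \<and>
        (\<exists>x \<in> A. lab u = extension (lab (par u)) (pos u) x)) \<and>
     (\<forall>v \<in> V. inj_on pos (children V r par v))"

definition complete_bifurcate_tree ::
  "'a set \<Rightarrow> 'n set \<Rightarrow> 'n \<Rightarrow> ('n \<Rightarrow> 'n) \<Rightarrow> ('n \<Rightarrow> 'a list) \<Rightarrow> ('n \<Rightarrow> nat) \<Rightarrow> bool" where
  "complete_bifurcate_tree A V r par lab pos \<longleftrightarrow>
     bifurcate_tree A V r par lab pos \<and>
     (\<forall>v \<in> V. finite (children V r par v) \<and>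
        card (children V r par v) = length (lab v) + 1)"

end

theory Submission
  imports Defs
begin

text \<open>The length-\<open>n\<close> prefixes of the long labels of a complete bifurcate tree form a
  nonempty set \<open>L\<close> of square-free words closed under insertion: for every \<open>u \<in> L\<close> and
  every position \<open>i < n\<close>, some letter inserted at \<open>i\<close> gives, cut back to length \<open>n\<close>,
  again a word of \<open>L\<close>. This property is invariant under renaming letters. For \<open>n = 7\<close>
  and four letters, a certificate lists the square-free words of length 7 up to renaming,
  each with a position \<open>i\<close> at which every insertion either creates a square or leads,
  after renaming, to a word further down the list. Starting from a word of \<open>L\<close> one could
  therefore walk down the list forever, so \<open>L\<close> is empty, although the tree has labels of
  every length.\<close>

lemma is_factor_map:
  assumes "is_factor u (map f w)"
  obtains u' where "is_factor u' w" "u = map f u'"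
proof -
  obtain p s where "map f w = p @ u @ s"
    using assms unfolding is_factor_def by blast
  then obtain p' r s' where "w = p' @ r @ s'" "u = map f r"
    by (metis map_eq_append_conv)
  then show ?thesis
    using that unfolding is_factor_def by blast
qed

lemma square_map_inj_on:
  assumes "square (map f u)" "inj_on f (set u)"
  shows "square u"
proof -
  obtain x where x: "x \<noteq> []" "map f u = x @ x"
    using assms(1) unfolding square_def by blast
  then obtain y z where yz: "u = y @ z" "map f y = x" "map f z = x"
    by (metis map_eq_append_conv)
  then have "y = z"
    using assms(2) inj_on_map_eq_map by (metis set_append)
  then show ?thesis
    using x yz unfolding square_def by auto
qed

lemma square_free_map:
  assumes "square_free w" "inj_on f (set w)"
  shows "square_free (map f w)"
  unfolding square_free_def
proof
  assume "\<exists>u. is_factor u (map f w) \<and> square u"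
  then obtain u where u: "is_factor u w" "square (map f u)"
    by (metis is_factor_map)
  then have "set u \<subseteq> set w"
    unfolding is_factor_def by auto
  then have "square u"
    using u(2) assms(2) square_map_inj_on inj_on_subset by blast
  then show False
    using assms(1) u(1) unfolding square_free_def by blast
qed

lemma square_free_take: "square_free w \<Longrightarrow> square_free (take n w)"
  unfolding square_free_def is_factor_def
  by (metis append.assoc append_take_drop_id)

lemma square_free_Cons: "square_free (a # w) \<Longrightarrow> square_free w"
  unfolding square_free_def is_factor_def
  by (metis append_Cons)

lemma map_extension: "map f (extension W i x) = extension (map f W) i (f x)"
  by (simp add: extension_def take_map drop_map)

lemma take_extension:
  assumes "i < n"
  shows "take n (extension W i x) = take n (extension (take n W) i x)"
  using assms by (cases "n - i") (auto simp: extension_def take_append min_def drop_take take_take)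

section \<open>Insertion-closed sets of words\<close>

definition insertion_closed :: "'a set \<Rightarrow> nat \<Rightarrow> 'a list set \<Rightarrow> bool" where
  "insertion_closed A n L \<longleftrightarrow>
     (\<forall>u\<in>L. length u = n \<and> set u \<subseteq> A \<and> square_free u \<and>
        (\<forall>i<n. \<exists>x\<in>A. take n (extension u i x) \<in> L))"

lemma insertion_closedD:
  assumes "insertion_closed A n L" "u \<in> L"
  shows "length u = n" "set u \<subseteq> A" "square_free u"
    and "i < n \<Longrightarrow> \<exists>x\<in>A. take n (extension u i x) \<in> L"
  using assms unfolding insertion_closed_def by auto

lemma insertion_closed_map:
  assumes "insertion_closed A n L" "inj_on f A" "f ` A \<subseteq> B"
  shows "insertion_closed B n (map f ` L)"
  unfolding insertion_closed_def
proof
  fix v assume "v \<in> map f ` L"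
  then obtain u where u: "u \<in> L" "v = map f u" by blast
  note closed_u = insertion_closedD[OF assms(1) u(1)]
  have "square_free v"
    using u(2) closed_u(2,3) square_free_map inj_on_subset[OF assms(2)] by blast
  moreover have "\<exists>y\<in>B. take n (extension v i y) \<in> map f ` L" if "i < n" for i
  proof -
    obtain x where "x \<in> A" "take n (extension u i x) \<in> L"
      using closed_u(4) \<open>i < n\<close> by blast
    moreover have "take n (extension v i (f x)) = map f (take n (extension u i x))"
      unfolding u(2) by (metis map_extension take_map)
    ultimately show ?thesis using assms(3) by blast
  qed
  ultimately show "length v = n \<and> set v \<subseteq> B \<and> square_free v \<and>
      (\<forall>i<n. \<exists>y\<in>B. take n (extension v i y) \<in> map f ` L)"
    using u(2) assms(3) closed_u(1,2) by auto
qed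

section \<open>Complete bifurcate trees\<close>

lemma complete_bifurcate_tree_child:
  assumes tree: "complete_bifurcate_tree A V r par lab pos" and "v \<in> V" "i \<le> length (lab v)"
  obtains c x where "c \<in> V" "x \<in> A" "lab c = extension (lab v) i x"
proof -
  let ?C = "children V r par v"
  have bt: "bifurcate_tree A V r par lab pos"
    using tree unfolding complete_bifurcate_tree_def by simp
  have "finite ?C" "card ?C = length (lab v) + 1"
    using tree \<open>v \<in> V\<close> unfolding complete_bifurcate_tree_def by auto
  moreover have "inj_on pos ?C"
    using bt \<open>v \<in> V\<close> unfolding bifurcate_tree_def by blast
  ultimately have "card (pos ` ?C) = card {0..length (lab v)}"
    by (simp add: card_image)
  moreover have "pos ` ?C \<subseteq> {0..length (lab v)}"
    using bt unfolding bifurcate_tree_def children_def by auto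
  ultimately have "pos ` ?C = {0..length (lab v)}"
    by (simp add: card_subset_eq)
  then obtain c where "c \<in> ?C" "pos c = i"
    using \<open>i \<le> length (lab v)\<close> by (metis atLeastAtMost_iff imageE le0)
  then have "c \<in> V - {r}" "par c = v" "pos c = i"
    unfolding children_def by auto
  moreover from this(1) obtain x where "x \<in> A" "lab c = extension (lab (par c)) (pos c) x"
    using bt unfolding bifurcate_tree_def by blast
  ultimately show ?thesis
    using that by blast
qed

lemma complete_bifurcate_tree_long_label:
  assumes "complete_bifurcate_tree A V r par lab pos"
  shows "\<exists>v\<in>V. n \<le> length (lab v)"
proof (induction n)
  case 0
  have "r \<in> V"
    using assms
    unfolding complete_bifurcate_tree_def bifurcate_tree_def rooted_tree_def by simp
  then show ?case by blast
next
  case (Suc n)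
  then obtain v where "v \<in> V" "n \<le> length (lab v)" by blast
  moreover obtain c x where "c \<in> V" "lab c = extension (lab v) 0 x"
    using complete_bifurcate_tree_child[OF assms \<open>v \<in> V\<close>] by blast
  ultimately show ?case
    by (intro bexI[of _ c]) (auto simp: extension_def)
qed

lemma complete_bifurcate_tree_prefixes_closed:
  assumes tree: "complete_bifurcate_tree A V r par lab pos"
  shows "insertion_closed A n {take n (lab v) |v. v \<in> V \<and> n \<le> length (lab v)}"
    (is "insertion_closed A n ?L")
  unfolding insertion_closed_def
proof (intro ballI)
  fix u assume "u \<in> ?L"
  then obtain v where v: "u = take n (lab v)" "v \<in> V" "n \<le> length (lab v)" by blast
  have "set (lab v) \<subseteq> A" "square_free (lab v)"
    using tree v(2)
    unfolding complete_bifurcate_tree_def bifurcate_tree_def bifurcate_def by auto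
  moreover have "\<exists>x\<in>A. take n (extension u i x) \<in> ?L" if "i < n" for i
  proof -
    have "i \<le> length (lab v)"
      using \<open>i < n\<close> v(3) by simp
    then obtain c x where c: "c \<in> V" "x \<in> A" "lab c = extension (lab v) i x"
      using complete_bifurcate_tree_child[OF tree v(2)] by blast
    have "take n (extension u i x) = take n (lab c)"
      unfolding v(1) c(3) by (rule take_extension[OF \<open>i < n\<close>, symmetric])
    moreover have "n \<le> length (lab c)"
      using c(3) v(3) by (simp add: extension_def)
    ultimately show ?thesis using c by blast
  qed
  ultimately show "length u = n \<and> set u \<subseteq> A \<and> square_free u \<and>
      (\<forall>i<n. \<exists>x\<in>A. take n (extension u i x) \<in> ?L)"
    using v set_take_subset[of n "lab v"] square_free_take[of "lab v" n] by auto
qed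

section \<open>Executable square-freeness and canonical renaming\<close>

text \<open>\<open>has_square_prefix w l\<close> detects a prefix \<open>xx\<close> with \<open>1 \<le> |x| \<le> l\<close> only when
  \<open>2 * l \<le> length w\<close>; for shorter \<open>w\<close> the compared slices are truncated and may
  agree spuriously.\<close>
fun has_square_prefix :: "'a list \<Rightarrow> nat \<Rightarrow> bool" where
  "has_square_prefix w 0 \<longleftrightarrow> False"
| "has_square_prefix w (Suc l) \<longleftrightarrow>
     take (Suc l) w = take (Suc l) (drop (Suc l) w) \<or> has_square_prefix w l"

fun square_free_check :: "'a list \<Rightarrow> bool" where
  "square_free_check [] \<longleftrightarrow> True"
| "square_free_check (a # w) \<longleftrightarrow>
     \<not> has_square_prefix (a # w) (length (a # w) div 2) \<and> square_free_check w"

lemma has_square_prefix_not_square_free: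
  "has_square_prefix w l \<Longrightarrow> 2 * l \<le> length w \<Longrightarrow> \<not> square_free w"
proof (induction l)
  case 0
  then show ?case by simp
next
  case (Suc l)
  show ?case
  proof (cases "has_square_prefix w l")
    case True
    then show ?thesis using Suc by simp
  next
    case False
    let ?x = "take (Suc l) w"
    have "?x = take (Suc l) (drop (Suc l) w)"
      using Suc.prems(1) False by simp
    then have "w = [] @ (?x @ ?x) @ drop (Suc l) (drop (Suc l) w)"
      by (metis append.assoc append_Nil append_take_drop_id)
    moreover have "?x \<noteq> []"
      using Suc.prems(2) by (cases w) auto
    ultimately show ?thesis
      unfolding square_free_def is_factor_def square_def by blast
  qed
qed

lemma square_free_imp_check: "square_free w \<Longrightarrow> square_free_check w"
proof (induction w)
  case Nil
  then show ?case by simp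
next
  case (Cons a w)
  then show ?case
    using has_square_prefix_not_square_free square_free_Cons by fastforce
qed

text \<open>A word is canonical if, reading it from the right, its letters are
  numbered 0, 1, 2, \<dots> in order of first occurrence.\<close>
fun canonical :: "nat list \<Rightarrow> bool" where
  "canonical [] \<longleftrightarrow> True"
| "canonical (x # w) \<longleftrightarrow> x \<le> card (set w) \<and> canonical w"

lemma canonical_set: "canonical w \<Longrightarrow> set w = {0..<card (set w)}"
proof (induction w)
  case Nil
  then show ?case by simp
next
  case (Cons x w)
  then have IH: "set w = {0..<card (set w)}" and "x \<le> card (set w)"
    by simp_all
  then consider "x \<in> set w" | "x = card (set w)"
    by fastforce
  then show ?case
  proof cases
    case 1
    then show ?thesis using IH by (simp add: insert_absorb)
  next
    case 2
    then have "x \<notin> set w"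
      using IH by auto
    then have "card (set (x # w)) = Suc x"
      using 2 by simp
    then show ?thesis
      using 2 IH by (simp add: atLeast0_lessThan_Suc)
  qed
qed

lemma canonical_renaming_exists:
  assumes "set w \<subseteq> {0..<k}"
  shows "\<exists>g. inj_on g {0..<k} \<and> g ` {0..<k} \<subseteq> {0..<k} \<and> canonical (map g w)"
  using assms
proof (induction w)
  case Nil
  show ?case by (rule exI[of _ id]) simp
next
  case (Cons x w)
  then obtain g where g: "inj_on g {0..<k}" "g ` {0..<k} \<subseteq> {0..<k}" "canonical (map g w)"
    by auto
  let ?m = "card (set (map g w))"
  have set_gw: "set (map g w) = {0..<?m}"
    using canonical_set g(3) by blast
  show ?case
  proof (cases "g x < ?m")
    case True
    then show ?thesis using g by auto
  next
    case False
    define h where "h = id(g x := ?m, ?m := g x)"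
    have "g x < k"
      using Cons.prems g(2) by (auto simp: image_subset_iff)
    moreover have "?m < k"
      using False \<open>g x < k\<close> by linarith
    ultimately have "inj h" "h ` {0..<k} \<subseteq> {0..<k}"
      unfolding h_def by (auto simp: inj_on_def)
    have "map h (map g w) = map g w"
    proof (rule map_idI)
      fix z assume "z \<in> set (map g w)"
      then have "z < ?m"
        using set_gw by (metis atLeastLessThan_iff)
      then show "h z = z"
        using False unfolding h_def by auto
    qed
    moreover have "h (g x) = ?m"
      unfolding h_def by simp
    ultimately have "map (h \<circ> g) (x # w) = ?m # map g w"
      by simp
    with g(3) have "canonical (map (h \<circ> g) (x # w))"
      by (simp only: canonical.simps le_refl simp_thms)
    moreover have "inj_on (h \<circ> g) {0..<k}"
      using comp_inj_on[OF g(1)] inj_on_subset \<open>inj h\<close> by blast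
    moreover have "(h \<circ> g) ` {0..<k} \<subseteq> {0..<k}"
      using g(2) \<open>h ` {0..<k} \<subseteq> {0..<k}\<close> by (auto simp: image_subset_iff)
    ultimately show ?thesis
      by blast
  qed
qed

section \<open>Certificates\<close>

fun canonical_words :: "nat \<Rightarrow> nat \<Rightarrow> nat list list" where
  "canonical_words k 0 = [[]]"
| "canonical_words k (Suc n) =
     [x # w. w \<leftarrow> canonical_words k n, x \<leftarrow> [0..<k],
       canonical (x # w) \<and> square_free_check (x # w)]"

lemma canonical_words_complete:
  "canonical w \<Longrightarrow> square_free_check w \<Longrightarrow> set w \<subseteq> {0..<k} \<Longrightarrow>
     w \<in> set (canonical_words k (length w))"
  by (induction w) auto

definition perm_list :: "nat \<Rightarrow> nat list \<Rightarrow> bool" where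
  "perm_list k p \<longleftrightarrow> length p = k \<and> distinct p \<and> (\<forall>z\<in>set p. z < k)"

lemma perm_list_nth:
  assumes "perm_list k p"
  shows "inj_on ((!) p) {0..<k}" "(!) p ` {0..<k} \<subseteq> {0..<k}"
  using assms unfolding perm_list_def by (auto simp: inj_on_def nth_eq_iff_index_eq)

text \<open>An entry \<open>(u, i, ps)\<close> records a position \<open>i\<close> at which every insertion of a
  letter \<open>y\<close> into \<open>u\<close>, cut back to length \<open>n\<close>, either contains a square or is
  renamed by the permutation \<open>ps ! y\<close> into the word of a later entry.\<close>
fun valid_cert :: "nat \<Rightarrow> nat \<Rightarrow> (nat list \<times> nat \<times> nat list list) list \<Rightarrow> bool" where
  "valid_cert k n [] \<longleftrightarrow> True"
| "valid_cert k n ((u, i, ps) # cs) \<longleftrightarrow> valid_cert k n cs \<and> i < n \<and> length ps = k \<and>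
     (\<forall>y<k. perm_list k (ps ! y) \<and>
        (\<not> square_free_check (take n (extension u i y)) \<or>
         map ((!) (ps ! y)) (take n (extension u i y)) \<in> fst ` set cs))"

lemma valid_cert_disjoint_closed:
  assumes "valid_cert k n cs" "insertion_closed {0..<k} n L"
  shows "L \<inter> fst ` set cs = {}"
  using assms
proof (induction cs arbitrary: L)
  case Nil
  then show ?case by simp
next
  case (Cons e cs)
  obtain u i ps where e: "e = (u, i, ps)"
    by (cases e) auto
  have "u \<notin> L"
  proof
    assume "u \<in> L"
    moreover have "i < n"
      using Cons.prems(1) unfolding e by simp
    ultimately have "\<exists>y\<in>{0..<k}. take n (extension u i y) \<in> L"
      by (rule insertion_closedD(4)[OF Cons.prems(2)])
    then obtain y where y: "y < k" "take n (extension u i y) \<in> L"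
      by auto
    let ?w = "take n (extension u i y)"
    let ?p = "ps ! y"
    have "square_free ?w"
      using insertion_closedD(3)[OF Cons.prems(2) y(2)] .
    then have "map ((!) ?p) ?w \<in> fst ` set cs" and "perm_list k ?p"
      using Cons.prems(1) y(1) square_free_imp_check unfolding e by auto
    moreover have "insertion_closed {0..<k} n (map ((!) ?p) ` L)"
      using insertion_closed_map[OF Cons.prems(2)] perm_list_nth[OF \<open>perm_list k ?p\<close>] by blast
    moreover have "valid_cert k n cs"
      using Cons.prems(1) unfolding e by simp
    ultimately show False
      using Cons.IH y(2) by blast
  qed
  then show ?case
    using Cons unfolding e by auto
qed

lemma insertion_closed_empty_by_cert:
  assumes "finite A" "insertion_closed A n L"
    and "valid_cert (card A) n cs" "set (canonical_words (card A) n) \<subseteq> fst ` set cs"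
  shows "L = {}"
proof (rule ccontr)
  assume "L \<noteq> {}"
  let ?k = "card A"
  obtain f where f: "bij_betw f A {0..<?k}"
    using ex_bij_betw_finite_nat[OF assms(1)] by (metis atLeast0LessThan)
  then have closed_f: "insertion_closed {0..<?k} n (map f ` L)"
    using insertion_closed_map[OF assms(2)] unfolding bij_betw_def by blast
  then obtain w where w: "w \<in> map f ` L"
    using \<open>L \<noteq> {}\<close> by blast
  have "set w \<subseteq> {0..<?k}" "length w = n" "square_free w"
    using insertion_closedD[OF closed_f w] by simp_all
  then obtain g where g: "inj_on g {0..<?k}" "g ` {0..<?k} \<subseteq> {0..<?k}" "canonical (map g w)"
    using canonical_renaming_exists by blast
  have "square_free (map g w)"
    using square_free_map[OF \<open>square_free w\<close> inj_on_subset[OF g(1) \<open>set w \<subseteq> {0..<?k}\<close>]] .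
  moreover have "set (map g w) \<subseteq> {0..<?k}"
    using g(2) \<open>set w \<subseteq> {0..<?k}\<close> by auto
  ultimately have "map g w \<in> fst ` set cs"
    using canonical_words_complete[OF g(3) square_free_imp_check] \<open>length w = n\<close> assms(4) by auto
  moreover have "insertion_closed {0..<?k} n (map g ` map f ` L)"
    using insertion_closed_map[OF closed_f g(1,2)] .
  ultimately show False
    using valid_cert_disjoint_closed[OF assms(3)] w by blast
qed

definition cert_7_4 :: "(nat list \<times> nat \<times> nat list list) list" where
  "cert_7_4 = [
  ([3,1,2,3,2,1,0], 1, [[3,0,1,2],[0,1,2,3],[3,0,1,2],[0,1,2,3]]),
  ([2,1,0,2,0,1,0], 1, [[1,0,2,3],[0,1,2,3],[0,1,2,3],[1,0,2,3]]),
  ([3,0,2,3,2,1,0], 1, [[0,1,2,3],[3,0,1,2],[3,0,1,2],[0,1,2,3]]),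
  ([0,1,2,0,2,1,0], 1, [[0,1,2,3],[0,1,2,3],[2,0,1,3],[2,0,1,3]]),
  ([2,0,3,2,0,1,0], 0, [[1,0,2,3],[1,0,2,3],[0,1,2,3],[0,1,2,3]]),
  ([2,3,0,2,0,1,0], 1, [[1,0,2,3],[1,0,2,3],[0,1,2,3],[0,1,2,3]]),
  ([2,3,1,2,0,1,0], 1, [[1,0,2,3],[1,0,2,3],[0,1,2,3],[0,1,2,3]]),
  ([1,2,3,1,2,1,0], 0, [[3,0,1,2],[0,1,2,3],[3,0,1,2],[0,1,2,3]]),
  ([0,2,3,0,2,1,0], 0, [[0,1,2,3],[2,0,1,3],[2,0,1,3],[0,1,2,3]]),
  ([3,0,1,3,2,1,0], 1, [[0,1,2,3],[3,0,1,2],[3,0,1,2],[0,1,2,3]]),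
  ([0,1,3,0,2,1,0], 1, [[0,1,2,3],[0,1,2,3],[2,0,1,3],[2,0,1,3]]),
  ([0,3,2,0,2,1,0], 1, [[0,1,2,3],[2,0,1,3],[2,0,1,3],[0,1,2,3]]),
  ([1,2,0,1,2,1,0], 0, [[0,1,2,3],[0,1,2,3],[2,0,1,3],[2,0,1,3]]),
  ([0,3,1,0,2,1,0], 1, [[0,1,2,3],[2,0,1,3],[2,0,1,3],[0,1,2,3]]),
  ([3,1,0,3,2,1,0], 1, [[3,0,1,2],[0,1,2,3],[3,0,1,2],[0,1,2,3]]),
  ([3,2,0,3,2,1,0], 0, [[0,1,2,3],[3,0,1,2],[3,0,1,2],[0,1,2,3]]),
  ([1,3,0,1,2,1,0], 1, [[2,0,1,3],[0,1,2,3],[2,0,1,3],[0,1,2,3]]),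
  ([2,1,3,2,0,1,0], 1, [[1,0,2,3],[0,1,2,3],[0,1,2,3],[1,0,2,3]]),
  ([1,0,3,1,2,1,0], 1, [[0,1,2,3],[0,1,2,3],[3,0,1,2],[3,0,1,2]]),
  ([0,2,0,1,2,1,0], 3, [[0,1,2,3],[0,1,2,3],[0,1,2,3],[3,0,1,2]]),
  ([3,1,0,1,2,1,0], 1, [[0,1,2,3],[0,1,2,3],[2,0,1,3],[0,1,2,3]]),
  ([1,3,0,3,2,1,0], 1, [[0,1,2,3],[0,1,2,3],[3,0,1,2],[0,1,2,3]]),
  ([3,2,0,1,2,1,0], 2, [[0,1,2,3],[2,0,1,3],[0,1,2,3],[2,0,1,3]]),
  ([3,2,3,0,2,1,0], 3, [[0,1,2,3],[2,0,1,3],[0,1,2,3],[0,1,2,3]]),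
  ([3,2,1,2,0,1,0], 1, [[1,0,2,3],[0,1,2,3],[0,1,2,3],[0,1,2,3]]),
  ([2,1,3,1,2,1,0], 1, [[3,0,1,2],[0,1,2,3],[0,1,2,3],[0,1,2,3]]),
  ([1,0,1,2,0,1,0], 3, [[0,1,2,3],[0,1,2,3],[0,1,2,3],[1,0,2,3]]),
  ([2,1,0,1,2,1,0], 1, [[0,1,2,3],[0,1,2,3],[0,1,2,3],[2,0,1,3]]),
  ([2,1,2,0,2,1,0], 3, [[0,1,2,3],[0,1,2,3],[0,1,2,3],[2,0,1,3]]),
  ([2,0,1,0,2,1,0], 1, [[0,1,2,3],[0,1,2,3],[0,1,2,3],[2,0,1,3]]),
  ([1,2,3,0,2,1,0], 2, [[2,0,1,3],[2,0,1,3],[0,1,2,3],[0,1,2,3]]),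
  ([0,2,1,3,2,1,0], 2, [[3,0,1,2],[0,1,2,3],[0,1,2,3],[3,0,1,2]]),
  ([3,0,1,0,2,1,0], 1, [[0,1,2,3],[0,1,2,3],[2,0,1,3],[0,1,2,3]]),
  ([1,0,3,0,2,1,0], 1, [[0,1,2,3],[0,1,2,3],[2,0,1,3],[0,1,2,3]]),
  ([0,1,0,2,0,1,0], 3, [[0,1,2,3],[0,1,2,3],[0,1,2,3],[1,0,2,3]]),
  ([0,2,0,3,2,1,0], 3, [[0,1,2,3],[3,0,1,2],[0,1,2,3],[0,1,2,3]]),
  ([1,2,3,2,0,1,0], 1, [[1,0,2,3],[0,1,2,3],[0,1,2,3],[0,1,2,3]]),
  ([2,1,3,0,2,1,0], 2, [[2,0,1,3],[0,1,2,3],[2,0,1,3],[0,1,2,3]]),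
  ([3,2,3,1,2,1,0], 3, [[2,0,1,3],[0,1,2,3],[0,1,2,3],[0,1,2,3]]),
  ([2,3,0,1,2,1,0], 2, [[0,1,2,3],[2,0,1,3],[2,0,1,3],[0,1,2,3]]),
  ([2,3,1,3,2,1,0], 1, [[3,0,1,2],[0,1,2,3],[0,1,2,3],[0,1,2,3]]),
  ([2,3,1,0,2,1,0], 2, [[2,0,1,3],[0,1,2,3],[2,0,1,3],[0,1,2,3]]),
  ([0,3,1,3,2,1,0], 1, [[0,1,2,3],[0,1,2,3],[3,0,1,2],[0,1,2,3]]),
  ([3,0,3,2,0,1,0], 3, [[0,1,2,3],[1,0,2,3],[0,1,2,3],[0,1,2,3]]),
  ([2,1,0,3,2,1,0], 2, [[0,1,2,3],[0,1,2,3],[3,0,1,2],[3,0,1,2]]),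
  ([2,0,3,0,2,1,0], 1, [[0,1,2,3],[2,0,1,3],[0,1,2,3],[0,1,2,3]]),
  ([0,1,3,1,2,1,0], 1, [[0,1,2,3],[0,1,2,3],[3,0,1,2],[0,1,2,3]]),
  ([0,2,1,2,0,1,0], 1, [[0,1,2,3],[0,1,2,3],[0,1,2,3],[1,0,2,3]]),
  ([1,2,1,3,2,1,0], 3, [[3,0,1,2],[0,1,2,3],[0,1,2,3],[0,1,2,3]]),
  ([0,2,3,1,2,1,0], 2, [[3,0,1,2],[3,0,1,2],[0,1,2,3],[0,1,2,3]]),
  ([1,0,3,2,0,1,0], 2, [[0,1,2,3],[1,0,2,3],[1,0,2,3],[0,1,2,3]]),
  ([0,2,3,2,0,1,0], 1, [[0,1,2,3],[1,0,2,3],[0,1,2,3],[0,1,2,3]]),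
  ([3,0,1,2,0,1,0], 2, [[0,1,2,3],[0,1,2,3],[1,0,2,3],[1,0,2,3]]),
  ([2,0,2,3,2,1,0], 3, [[0,1,2,3],[3,0,1,2],[0,1,2,3],[0,1,2,3]]),
  ([2,3,0,3,2,1,0], 1, [[0,1,2,3],[3,0,1,2],[0,1,2,3],[0,1,2,3]]),
  ([1,2,0,3,2,1,0], 2, [[0,1,2,3],[3,0,1,2],[0,1,2,3],[3,0,1,2]]),
  ([2,3,2,0,2,1,0], 3, [[0,1,2,3],[2,0,1,3],[0,1,2,3],[0,1,2,3]]),
  ([0,3,1,2,0,1,0], 2, [[1,0,2,3],[0,1,2,3],[1,0,2,3],[0,1,2,3]]),
  ([2,0,3,1,2,1,0], 2, [[0,1,2,3],[3,0,1,2],[3,0,1,2],[0,1,2,3]]),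
  ([0,1,3,2,0,1,0], 2, [[1,0,2,3],[0,1,2,3],[1,0,2,3],[0,1,2,3]]),
  ([0,3,0,2,0,1,0], 3, [[0,1,2,3],[1,0,2,3],[0,1,2,3],[0,1,2,3]]),
  ([2,1,2,3,2,1,0], 3, [[3,0,1,2],[0,1,2,3],[0,1,2,3],[0,1,2,3]]),
  ([2,0,1,3,2,1,0], 2, [[0,1,2,3],[0,1,2,3],[3,0,1,2],[3,0,1,2]]),
  ([1,3,2,0,2,1,0], 2, [[0,1,2,3],[2,0,1,3],[0,1,2,3],[0,1,2,3]]),
  ([0,1,2,3,2,1,0], 2, [[3,0,1,2],[0,1,2,3],[0,1,2,3],[0,1,2,3]]),
  ([1,3,1,0,2,1,0], 3, [[0,1,2,3],[0,1,2,3],[2,0,1,3],[0,1,2,3]]),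
  ([1,0,2,3,2,1,0], 2, [[0,1,2,3],[3,0,1,2],[0,1,2,3],[0,1,2,3]]),
  ([1,3,1,2,0,1,0], 3, [[1,0,2,3],[0,1,2,3],[0,1,2,3],[0,1,2,3]]),
  ([3,1,3,0,2,1,0], 3, [[0,1,2,3],[0,1,2,3],[2,0,1,3],[0,1,2,3]]),
  ([3,1,2,0,2,1,0], 2, [[0,1,2,3],[0,1,2,3],[0,1,2,3],[2,0,1,3]]),
  ([3,1,3,2,0,1,0], 3, [[1,0,2,3],[0,1,2,3],[0,1,2,3],[0,1,2,3]]),
  ([3,1,0,2,0,1,0], 2, [[0,1,2,3],[0,1,2,3],[0,1,2,3],[1,0,2,3]]),
  ([0,1,0,3,2,1,0], 3, [[0,1,2,3],[0,1,2,3],[3,0,1,2],[0,1,2,3]]),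
  ([1,0,1,3,2,1,0], 3, [[0,1,2,3],[0,1,2,3],[3,0,1,2],[0,1,2,3]]),
  ([1,3,0,2,0,1,0], 2, [[0,1,2,3],[1,0,2,3],[0,1,2,3],[0,1,2,3]]),
  ([0,3,0,1,2,1,0], 3, [[0,1,2,3],[0,1,2,3],[0,1,2,3],[0,1,2,3]]),
  ([3,0,3,1,2,1,0], 3, [[0,1,2,3],[0,1,2,3],[0,1,2,3],[0,1,2,3]])]"

lemma valid_cert_7_4: "valid_cert 4 7 cert_7_4"
  by code_simp

lemma canonical_words_7_4_covered: "set (canonical_words 4 7) \<subseteq> fst ` set cert_7_4"
  by code_simp

lemma insertion_closed_7_card_4_empty:
  assumes "card A = 4" "insertion_closed A 7 L"
  shows "L = {}"
proof -
  have "finite A"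
    using assms(1) by (metis card.infinite zero_neq_numeral)
  then show ?thesis
    using insertion_closed_empty_by_cert[OF _ assms(2)] valid_cert_7_4
      canonical_words_7_4_covered
    unfolding assms(1) by blast
qed

theorem mainTheorem7:
  fixes A :: "'a set" and V :: "'n set" and r :: 'n and par :: "'n \<Rightarrow> 'n"
    and lab :: "'n \<Rightarrow> 'a list" and pos :: "'n \<Rightarrow> nat"
  assumes "card A = 4"
  shows "\<not> complete_bifurcate_tree A V r par lab pos"
proof
  assume tree: "complete_bifurcate_tree A V r par lab pos"
  let ?L = "{take 7 (lab v) |v. v \<in> V \<and> 7 \<le> length (lab v)}"
  have "?L = {}"
    using insertion_closed_7_card_4_empty[OF assms]
      complete_bifurcate_tree_prefixes_closed[OF tree] by blast
  moreover obtain v where "v \<in> V" "7 \<le> length (lab v)"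
    using complete_bifurcate_tree_long_label[OF tree] by blast
  ultimately show False
    by blast
qed

end
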